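(* Let $(J,[\cdot,\cdot],\alpha)$ be a Hom-Jacobi-Jordan algebra, $(V,\rho,\beta)$ a representation of $J$ on $V$ with respect to $\beta$, and let $\theta,\theta'$ be $2$-cocycles of $J$ with coefficients in $V$ which are equivalent, i.e. $\theta'-\theta\in B^2_{\alpha,\beta}(J,V)$. Then the extensions $(J\oplus V,[\cdot,\cdot]_{\theta},\alpha+\beta)$ and $(J\oplus V,[\cdot,\cdot]_{\theta'},\alpha+\beta)$ are equivalent: there is an isomorphism of Hom-Jacobi-Jordan algebras $\Phi\colon(J\oplus V,[\cdot,\cdot]_{\theta},\alpha+\beta)\to(J\oplus V,[\cdot,\cdot]_{\theta'},\alpha+\beta)$ with $\Phi\circ i_0=i_0$ and $\pi_0\circ\Phi=\pi_0$.
   Context: A Hom-Jacobi-Jordan algebra is a triple $(J,[\cdot,\cdot],\alpha)$ with $J$ a vector space, $[\cdot,\cdot]$ symmetric bilinear and $\alpha$ linear, satisfying $[\alpha(x),[y,z]]+[\alpha(y),[z,x]]+[\alpha(z),[x,y]]=0$. An isomorphism of Hom-Jacobi-Jordan algebras is a bijective linear map $\phi$ with $\phi\circ\alpha=\alpha'\circ\phi$ and $\phi([x,y])=[\phi(x),\phi(y)]'$. A representation of $J$ on $V$ with respect to $\beta\in\mathrm{End}(V)$ is a linear $\rho\colon J\to\mathrm{End}(V)$ with $\rho(\alpha(x))\circ\beta=\beta\circ\rho(x)$ and $\rho([x,y])\circ\beta=-\rho(\alpha(x))\rho(y)-\rho(\alpha(y))\rho(x)$. $C^2_{\alpha,\beta}(J,V)$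 is the set of symmetric bilinear $g\colon J\times J\to V$ with $\beta(g(x,y))=g(\alpha(x),\alpha(y))$; a $2$-cocycle is $g\in C^2_{\alpha,\beta}(J,V)$ with $g(\alpha(x),[y,z])+g(\alpha(y),[x,z])+g(\alpha(z),[x,y])+\rho(\alpha(x))g(y,z)+\rho(\alpha(y))g(x,z)+\rho(\alpha(z))g(x,y)=0$ for all $x,y,z$. $B^2_{\alpha,\beta}(J,V)$ is the set of maps $d^1f(x,y)=f([x,y])-\rho(x)f(y)-\rho(y)f(x)$ with $f\colon J\to V$ linear and $f\circ\alpha=\beta\circ f$. For a $2$-cocycle $\theta$, $J\oplus V$ carries the bracket $[x+v,y+w]_\theta=[x,y]+\rho(x)w+\rho(y)v+\theta(x,y)$ and the map $(\alpha+\beta)(x+v)=\alpha(x)+\beta(v)$; $i_0(v)=v$ and $\pi_0(x+v)=x$. *)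

theory Defs
  imports "HOL-Analysis.Analysis"
begin

definition bilinear_map ::
  "('k::field \<Rightarrow> 'a::ab_group_add \<Rightarrow> 'a) \<Rightarrow> ('k \<Rightarrow> 'b::ab_group_add \<Rightarrow> 'b) \<Rightarrow>
   ('k \<Rightarrow> 'c::ab_group_add \<Rightarrow> 'c) \<Rightarrow> ('a \<Rightarrow> 'b \<Rightarrow> 'c) \<Rightarrow> bool" where
  "bilinear_map s1 s2 s3 f \<longleftrightarrow>
     (\<forall>x. Vector_Spaces.linear s2 s3 (f x)) \<and> (\<forall>y. Vector_Spaces.linear s1 s3 (\<lambda>x. f x y))"

definition hom_jacobi_jordan ::
  "('k::field \<Rightarrow> 'j::ab_group_add \<Rightarrow> 'j) \<Rightarrow> ('j \<Rightarrow> 'j \<Rightarrow> 'j) \<Rightarrow> ('j \<Rightarrow> 'j) \<Rightarrow> bool" where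
  "hom_jacobi_jordan s br al \<longleftrightarrow>
     vector_space s \<and> bilinear_map s s s br \<and> (\<forall>x y. br x y = br y x) \<and>
     Vector_Spaces.linear s s al \<and>
     (\<forall>x y z. br (al x) (br y z) + br (al y) (br z x) + br (al z) (br x y) = 0)"

definition hjj_rep ::
  "('k::field \<Rightarrow> 'j::ab_group_add \<Rightarrow> 'j) \<Rightarrow> ('k \<Rightarrow> 'v::ab_group_add \<Rightarrow> 'v) \<Rightarrow>
   ('j \<Rightarrow> 'j \<Rightarrow> 'j) \<Rightarrow> ('j \<Rightarrow> 'j) \<Rightarrow> ('j \<Rightarrow> 'v \<Rightarrow> 'v) \<Rightarrow> ('v \<Rightarrow> 'v) \<Rightarrow> bool" where
  "hjj_rep s sv br al rho beta \<longleftrightarrow>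
     vector_space sv \<and> Vector_Spaces.linear sv sv beta \<and>
     (\<forall>x. Vector_Spaces.linear sv sv (rho x)) \<and>
     (\<forall>v. Vector_Spaces.linear s sv (\<lambda>x. rho x v)) \<and>
     (\<forall>x v. rho (al x) (beta v) = beta (rho x v)) \<and>
     (\<forall>x y v. rho (br x y) (beta v) = - rho (al x) (rho y v) - rho (al y) (rho x v))"

definition C2 ::
  "('k::field \<Rightarrow> 'j::ab_group_add \<Rightarrow> 'j) \<Rightarrow> ('k \<Rightarrow> 'v::ab_group_add \<Rightarrow> 'v) \<Rightarrow>
   ('j \<Rightarrow> 'j) \<Rightarrow> ('v \<Rightarrow> 'v) \<Rightarrow> ('j \<Rightarrow> 'j \<Rightarrow> 'v) \<Rightarrow> bool" where
  "C2 s sv al beta g \<longleftrightarrow>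
     bilinear_map s s sv g \<and> (\<forall>x y. g x y = g y x) \<and>
     (\<forall>x y. beta (g x y) = g (al x) (al y))"

definition two_cocycle ::
  "('k::field \<Rightarrow> 'j::ab_group_add \<Rightarrow> 'j) \<Rightarrow> ('k \<Rightarrow> 'v::ab_group_add \<Rightarrow> 'v) \<Rightarrow>
   ('j \<Rightarrow> 'j \<Rightarrow> 'j) \<Rightarrow> ('j \<Rightarrow> 'j) \<Rightarrow> ('j \<Rightarrow> 'v \<Rightarrow> 'v) \<Rightarrow> ('v \<Rightarrow> 'v) \<Rightarrow>
   ('j \<Rightarrow> 'j \<Rightarrow> 'v) \<Rightarrow> bool" where
  "two_cocycle s sv br al rho beta g \<longleftrightarrow>
     C2 s sv al beta g \<and>
     (\<forall>x y z. g (al x) (br y z) + g (al y) (br x z) + g (al z) (br x y)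
        + rho (al x) (g y z) + rho (al y) (g x z) + rho (al z) (g x y) = 0)"

definition d1 :: "('j \<Rightarrow> 'j \<Rightarrow> 'j) \<Rightarrow> ('j \<Rightarrow> 'v::ab_group_add \<Rightarrow> 'v) \<Rightarrow> ('j \<Rightarrow> 'v) \<Rightarrow> 'j \<Rightarrow> 'j \<Rightarrow> 'v" where
  "d1 br rho f x y = f (br x y) - rho x (f y) - rho y (f x)"

definition B2 ::
  "('k::field \<Rightarrow> 'j::ab_group_add \<Rightarrow> 'j) \<Rightarrow> ('k \<Rightarrow> 'v::ab_group_add \<Rightarrow> 'v) \<Rightarrow>
   ('j \<Rightarrow> 'j \<Rightarrow> 'j) \<Rightarrow> ('j \<Rightarrow> 'j) \<Rightarrow> ('j \<Rightarrow> 'v \<Rightarrow> 'v) \<Rightarrow> ('v \<Rightarrow> 'v) \<Rightarrow>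
   ('j \<Rightarrow> 'j \<Rightarrow> 'v) set" where
  "B2 s sv br al rho beta =
     {d1 br rho f | f. Vector_Spaces.linear s sv f \<and> f \<circ> al = beta \<circ> f}"

definition sum_scale :: "('k \<Rightarrow> 'j \<Rightarrow> 'j) \<Rightarrow> ('k \<Rightarrow> 'v \<Rightarrow> 'v) \<Rightarrow> 'k \<Rightarrow> 'j \<times> 'v \<Rightarrow> 'j \<times> 'v" where
  "sum_scale s sv c p = (s c (fst p), sv c (snd p))"

definition ext_bracket ::
  "('j \<Rightarrow> 'j \<Rightarrow> 'j) \<Rightarrow> ('j \<Rightarrow> 'v::ab_group_add \<Rightarrow> 'v) \<Rightarrow> ('j \<Rightarrow> 'j \<Rightarrow> 'v) \<Rightarrow>
   'j \<times> 'v \<Rightarrow> 'j \<times> 'v \<Rightarrow> 'j \<times> 'v" where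
  "ext_bracket br rho th p q =
     (br (fst p) (fst q), rho (fst p) (snd q) + rho (fst q) (snd p) + th (fst p) (fst q))"

definition ext_map :: "('j \<Rightarrow> 'j) \<Rightarrow> ('v \<Rightarrow> 'v) \<Rightarrow> 'j \<times> 'v \<Rightarrow> 'j \<times> 'v" where
  "ext_map al beta p = (al (fst p), beta (snd p))"

definition i0 :: "'v \<Rightarrow> 'j::zero \<times> 'v" where
  "i0 v = (0, v)"

definition pi0 :: "'j \<times> 'v \<Rightarrow> 'j" where
  "pi0 p = fst p"

definition hjj_iso ::
  "('k::field \<Rightarrow> 'a::ab_group_add \<Rightarrow> 'a) \<Rightarrow> ('a \<Rightarrow> 'a \<Rightarrow> 'a) \<Rightarrow> ('a \<Rightarrow> 'a) \<Rightarrow>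
   ('k \<Rightarrow> 'b::ab_group_add \<Rightarrow> 'b) \<Rightarrow> ('b \<Rightarrow> 'b \<Rightarrow> 'b) \<Rightarrow> ('b \<Rightarrow> 'b) \<Rightarrow> ('a \<Rightarrow> 'b) \<Rightarrow> bool" where
  "hjj_iso s1 br1 al1 s2 br2 al2 phi \<longleftrightarrow>
     Vector_Spaces.linear s1 s2 phi \<and> bij phi \<and> phi \<circ> al1 = al2 \<circ> phi \<and>
     (\<forall>x y. phi (br1 x y) = br2 (phi x) (phi y))"

end

theory Submission
  imports Defs
begin

text \<open>The isomorphism is the shear \<open>x + v \<mapsto> x + v + f x\<close>, where \<open>\<theta>' - \<theta> = d\<^sup>1 f\<close>.
  It fixes \<open>V\<close> pointwise and induces the identity on \<open>J\<close>; it commutes with \<open>\<alpha> + \<beta>\<close>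
  because \<open>f \<circ> \<alpha> = \<beta> \<circ> f\<close>, and the terms \<open>\<rho>(x) f(y) + \<rho>(y) f(x)\<close> it adds to the bracket
  are exactly compensated by the coboundary \<open>d\<^sup>1 f\<close>.\<close>

definition shear :: "('j \<Rightarrow> 'v::ab_group_add) \<Rightarrow> 'j \<times> 'v \<Rightarrow> 'j \<times> 'v" where
  "shear f p = (fst p, snd p + f (fst p))"

lemma linear_imp_additive: "Vector_Spaces.linear s1 s2 f \<Longrightarrow> Modules.additive f"
  by (simp add: Modules.additive_def Vector_Spaces.linear_iff)

lemma vector_space_sum_scale:
  assumes "vector_space s" "vector_space sv"
  shows "vector_space (sum_scale s sv)"
proof -
  interpret J: vector_space s by fact
  interpret V: vector_space sv by fact
  show ?thesis
    by unfold_locales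
      (auto simp: sum_scale_def J.scale_right_distrib J.scale_left_distrib
         V.scale_right_distrib V.scale_left_distrib)
qed

lemma linear_shear:
  assumes "vector_space s" "vector_space sv" "Vector_Spaces.linear s sv f"
  shows "Vector_Spaces.linear (sum_scale s sv) (sum_scale s sv) (shear f)"
proof -
  interpret V: vector_space sv by fact
  interpret JV: vector_space "sum_scale s sv"
    using assms(1,2) by (rule vector_space_sum_scale)
  interpret f: Vector_Spaces.linear s sv f by fact
  show ?thesis
    unfolding Vector_Spaces.linear_iff using JV.vector_space_axioms
    by (auto simp: shear_def sum_scale_def f.add f.scale V.scale_right_distrib algebra_simps)
qed

lemma shear_shear: "shear g (shear f p) = shear (\<lambda>x. f x + g x) p"
  by (simp add: shear_def algebra_simps)

lemma bij_shear: "bij (shear f)"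
  by (rule bij_betw_byWitness[where f' = "shear (\<lambda>x. - f x)"])
    (auto simp: shear_shear shear_def)

lemma shear_comp_ext_map:
  assumes "f \<circ> al = beta \<circ> f" and "Modules.additive beta"
  shows "shear f \<circ> ext_map al beta = ext_map al beta \<circ> shear f"
proof
  fix p
  show "(shear f \<circ> ext_map al beta) p = (ext_map al beta \<circ> shear f) p"
    using fun_cong[OF assms(1), of "fst p"] Modules.additive.add[OF assms(2)]
    by (simp add: shear_def ext_map_def)
qed

lemma shear_ext_bracket:
  assumes "\<And>x. Modules.additive (rho x)"
    and "\<And>x y. th' x y - th x y = d1 br rho f x y"
  shows "shear f (ext_bracket br rho th p q) = ext_bracket br rho th' (shear f p) (shear f q)"
proof -
  have "th' x y = th x y + f (br x y) - rho x (f y) - rho y (f x)" for x y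
    using assms(2)[of x y] by (simp add: d1_def algebra_simps)
  then show ?thesis
    using Modules.additive.add[OF assms(1)]
    by (simp add: shear_def ext_bracket_def algebra_simps)
qed

lemma shear_comp_i0: "f 0 = 0 \<Longrightarrow> shear f \<circ> i0 = i0"
  by (simp add: fun_eq_iff shear_def i0_def)

lemma pi0_comp_shear: "pi0 \<circ> shear f = pi0"
  by (simp add: fun_eq_iff shear_def pi0_def)

theorem lemma4p3:
  fixes s :: "'k::field \<Rightarrow> 'j::ab_group_add \<Rightarrow> 'j"
    and sv :: "'k \<Rightarrow> 'v::ab_group_add \<Rightarrow> 'v"
    and br :: "'j \<Rightarrow> 'j \<Rightarrow> 'j" and al :: "'j \<Rightarrow> 'j"
    and rho :: "'j \<Rightarrow> 'v \<Rightarrow> 'v" and beta :: "'v \<Rightarrow> 'v"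
    and th th' :: "'j \<Rightarrow> 'j \<Rightarrow> 'v"
  assumes "hom_jacobi_jordan s br al"
    and "hjj_rep s sv br al rho beta"
    and "two_cocycle s sv br al rho beta th"
    and "two_cocycle s sv br al rho beta th'"
    and "(\<lambda>x y. th' x y - th x y) \<in> B2 s sv br al rho beta"
  shows "\<exists>Phi. hjj_iso (sum_scale s sv) (ext_bracket br rho th) (ext_map al beta)
                      (sum_scale s sv) (ext_bracket br rho th') (ext_map al beta) Phi
             \<and> Phi \<circ> i0 = i0 \<and> pi0 \<circ> Phi = pi0"
proof -
  have J: "vector_space s" using assms(1) by (simp add: hom_jacobi_jordan_def)
  have V: "vector_space sv" and beta: "Modules.additive beta"
    and rho: "\<And>x. Modules.additive (rho x)"
    using assms(2) by (auto simp: hjj_rep_def intro: linear_imp_additive)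
  obtain f where f: "Vector_Spaces.linear s sv f" "f \<circ> al = beta \<circ> f"
    and coboundary: "\<And>x y. th' x y - th x y = d1 br rho f x y"
    using assms(5) by (auto simp: B2_def fun_eq_iff)
  have "f 0 = 0"
    using f(1) by (intro Modules.additive.zero linear_imp_additive)
  moreover have "hjj_iso (sum_scale s sv) (ext_bracket br rho th) (ext_map al beta)
      (sum_scale s sv) (ext_bracket br rho th') (ext_map al beta) (shear f)"
    unfolding hjj_iso_def
    using linear_shear[OF J V f(1)] bij_shear shear_comp_ext_map[OF f(2) beta]
      shear_ext_bracket[OF rho coboundary] by blast
  ultimately show ?thesis
    using shear_comp_i0 pi0_comp_shear by blast
qed

end
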